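(* Let $X$ and $Y$ be Banach spaces with $Y$ prime. If $S\in B(Y)$ is compact and equivalent after extension to some $T\in B(X)$, then $X$ contains a closed subspace topologically isomorphic to $Y$.
   Context: All Banach spaces are complex; $B(X,Y)$ denotes bounded linear operators; invertibility means bounded inverse; $X\oplus Y$ is the $\ell^2$-direct sum and $\mathrm{id}_X$ the identity. Operators $T\in B(X)$ and $S\in B(Y)$ are equivalent after extension if there exist Banach spaces $X'$, $Y'$ and invertible $E\in B(Y\oplus Y',X\oplus X')$, $F\in B(X\oplus X',Y\oplus Y')$ with $\begin{bmatrix}T&0\\0&\mathrm{id}_{X'}\end{bmatrix}=E\begin{bmatrix}S&0\\0&\mathrm{id}_{Y'}\end{bmatrix}F$. A Banach space is prime if every infinite dimensional complemented subspace of it is topologically isomorphic to the whole space. *)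

theory Defs
  imports "HOL-Analysis.Analysis"
begin

class cscale =
  fixes cscale :: "complex \<Rightarrow> 'a \<Rightarrow> 'a" (infixr "*\<^sub>C" 75)

class complex_banach = banach + cscale +
  assumes cscale_add_right: "a *\<^sub>C (x + y) = a *\<^sub>C x + a *\<^sub>C y"
    and cscale_add_left: "(a + b) *\<^sub>C x = a *\<^sub>C x + b *\<^sub>C x"
    and cscale_cscale: "a *\<^sub>C (b *\<^sub>C x) = (a * b) *\<^sub>C x"
    and cscale_of_real: "complex_of_real r *\<^sub>C x = r *\<^sub>R x"
    and norm_cscale: "norm (a *\<^sub>C x) = cmod a * norm x"

text \<open>The l2-direct sum: the product type carries the norm sqrt(norm x ^ 2 + norm y ^ 2).\<close>

instantiation prod :: (complex_banach, complex_banach) complex_banach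
begin

definition cscale_prod :: "complex \<Rightarrow> 'a \<times> 'b \<Rightarrow> 'a \<times> 'b" where
  "cscale_prod c p = (c *\<^sub>C fst p, c *\<^sub>C snd p)"

instance
proof
  fix a b :: complex and x y :: "'a \<times> 'b" and r :: real
  show "a *\<^sub>C (x + y) = a *\<^sub>C x + a *\<^sub>C y"
    by (simp add: cscale_prod_def cscale_add_right)
  show "(a + b) *\<^sub>C x = a *\<^sub>C x + b *\<^sub>C x"
    by (simp add: cscale_prod_def cscale_add_left)
  show "a *\<^sub>C (b *\<^sub>C x) = (a * b) *\<^sub>C x"
    by (simp add: cscale_prod_def cscale_cscale)
  show "complex_of_real r *\<^sub>C x = r *\<^sub>R x"
    by (simp add: cscale_prod_def cscale_of_real prod_eq_iff)
  have "norm (a *\<^sub>C x) = sqrt ((cmod a)\<^sup>2 * ((norm (fst x))\<^sup>2 + (norm (snd x))\<^sup>2))"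
    by (simp add: cscale_prod_def norm_Pair norm_cscale power_mult_distrib algebra_simps)
  also have "\<dots> = cmod a * norm x"
    by (simp add: real_sqrt_mult norm_prod_def)
  finally show "norm (a *\<^sub>C x) = cmod a * norm x" .
qed

end

definition bounded_clinear :: "('a::complex_banach \<Rightarrow> 'b::complex_banach) \<Rightarrow> bool" where
  "bounded_clinear f \<longleftrightarrow> bounded_linear f \<and> (\<forall>c x. f (c *\<^sub>C x) = c *\<^sub>C f x)"

definition invertible_op :: "('a::complex_banach \<Rightarrow> 'b::complex_banach) \<Rightarrow> bool" where
  "invertible_op f \<longleftrightarrow> bounded_clinear f \<and>
     (\<exists>g. bounded_clinear g \<and> g \<circ> f = id \<and> f \<circ> g = id)"

definition compact_op :: "('a::complex_banach \<Rightarrow> 'b::complex_banach) \<Rightarrow> bool" where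
  "compact_op f \<longleftrightarrow> bounded_clinear f \<and> compact (closure (f ` cball 0 1))"

text \<open>Equivalence after extension, with the auxiliary spaces X', Y' and operators E, F
  given explicitly (the spaces being types).\<close>
definition equiv_after_ext_via ::
  "('x::complex_banach \<Rightarrow> 'x) \<Rightarrow> ('y::complex_banach \<Rightarrow> 'y)
   \<Rightarrow> ('y \<times> 'y2::complex_banach \<Rightarrow> 'x \<times> 'x2::complex_banach)
   \<Rightarrow> ('x \<times> 'x2 \<Rightarrow> 'y \<times> 'y2) \<Rightarrow> bool" where
  "equiv_after_ext_via T S E F \<longleftrightarrow> invertible_op E \<and> invertible_op F \<and>
     (\<lambda>(x, x'). (T x, x')) = E \<circ> (\<lambda>(y, y'). (S y, y')) \<circ> F"

definition csubspace :: "'a::complex_banach set \<Rightarrow> bool" where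
  "csubspace M \<longleftrightarrow> 0 \<in> M \<and> (\<forall>x\<in>M. \<forall>y\<in>M. x + y \<in> M) \<and> (\<forall>c. \<forall>x\<in>M. c *\<^sub>C x \<in> M)"

definition cspan :: "'a::complex_banach set \<Rightarrow> 'a set" where
  "cspan B = \<Inter>{M. csubspace M \<and> B \<subseteq> M}"

definition infinite_dim :: "'a::complex_banach set \<Rightarrow> bool" where
  "infinite_dim M \<longleftrightarrow> \<not> (\<exists>B. finite B \<and> M \<subseteq> cspan B)"

definition complemented :: "'a::complex_banach set \<Rightarrow> bool" where
  "complemented M \<longleftrightarrow> csubspace M \<and> closed M \<and>
     (\<exists>N. csubspace N \<and> closed N \<and> M \<inter> N = {0} \<and> {m + n |m n. m \<in> M \<and> n \<in> N} = UNIV)"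

definition top_iso_onto :: "('a::complex_banach \<Rightarrow> 'b::complex_banach) \<Rightarrow> 'b set \<Rightarrow> bool" where
  "top_iso_onto f M \<longleftrightarrow> bounded_clinear f \<and> bij_betw f UNIV M \<and> continuous_on M (inv_into UNIV f)"

text \<open>Prime Banach space (infinite dimensional, as is standard).\<close>
definition prime_space :: "'a::complex_banach itself \<Rightarrow> bool" where
  "prime_space _ \<longleftrightarrow> infinite_dim (UNIV :: 'a set) \<and>
     (\<forall>M :: 'a set. complemented M \<and> infinite_dim M \<longrightarrow> (\<exists>f :: 'a \<Rightarrow> 'a. top_iso_onto f M))"

end

theory Submission
  imports Defs
begin

text \<open>Write \<open>G = F\<inverse>\<close>. Restricting \<open>T \<oplus> I = E (S \<oplus> I) F\<close> to \<open>Y \<times> 0\<close> shows that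
  \<open>J y = fst (G (y, 0))\<close> is left invertible modulo a compact operator: \<open>y = A (J y) + C y\<close>
  with \<open>C\<close> compact. By Riesz theory, for large \<open>s\<close> the range \<open>R\<close> of \<open>P = (I - C)\<^sup>s\<close> is
  complemented by the finite dimensional kernel of \<open>P\<close>, and \<open>I - C\<close>, hence \<open>J\<close>, is injective
  on \<open>R\<close>. An operator that is left invertible modulo a compact operator and injective on a closed
  subspace is bounded below there, so \<open>J\<close> maps \<open>R\<close> isomorphically onto a closed subspace
  of \<open>X\<close>; and \<open>R\<close> is isomorphic to \<open>Y\<close> because \<open>Y\<close> is prime.\<close>

lemma cscale_zero_left [simp]: "(0::complex) *\<^sub>C (x::'a::complex_banach) = 0"
  using cscale_of_real[of 0 x] by simp

lemma cscale_one [simp]: "(1::complex) *\<^sub>C (x::'a::complex_banach) = x"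
  using cscale_of_real[of 1 x] by simp

lemma cscale_zero_right [simp]: "c *\<^sub>C (0::'a::complex_banach) = 0"
  using cscale_add_right[of c "0::'a" 0] by simp

lemma cscale_diff_right: "c *\<^sub>C (x - y) = c *\<^sub>C x - c *\<^sub>C (y::'a::complex_banach)"
  using cscale_add_right[of c "x - y" y] by (simp add: eq_diff_eq)

lemma bounded_clinear_imp_bounded_linear: "bounded_clinear f \<Longrightarrow> bounded_linear f"
  by (simp add: bounded_clinear_def)

lemma bounded_clinear_cscale: "bounded_clinear f \<Longrightarrow> f (c *\<^sub>C x) = c *\<^sub>C f x"
  by (simp add: bounded_clinear_def)

lemma bounded_clinear_linear: "bounded_clinear f \<Longrightarrow> linear f"
  by (simp add: bounded_clinear_def bounded_linear.linear)

lemma bounded_clinear_ident: "bounded_clinear (\<lambda>x. x)"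
  by (simp add: bounded_clinear_def bounded_linear_ident)

lemma bounded_clinear_compose:
  "bounded_clinear f \<Longrightarrow> bounded_clinear g \<Longrightarrow> bounded_clinear (\<lambda>x. f (g x))"
  by (auto simp: bounded_clinear_def intro: bounded_linear_compose)

lemma bounded_clinear_diff:
  "bounded_clinear f \<Longrightarrow> bounded_clinear g \<Longrightarrow> bounded_clinear (\<lambda>x. f x - g x)"
  by (auto simp: bounded_clinear_def cscale_diff_right intro: bounded_linear_sub)

lemma bounded_clinear_funpow:
  "bounded_clinear (f::'a::complex_banach \<Rightarrow> 'a) \<Longrightarrow> bounded_clinear (f ^^ n)"
proof (induction n)
  case 0
  show ?case
    by (simp add: id_def bounded_clinear_ident)
next
  case (Suc n)
  then show ?case using bounded_clinear_compose[of f "f ^^ n"] by (simp add: o_def)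
qed

lemma bounded_clinear_fst: "bounded_clinear fst"
  by (simp add: bounded_clinear_def bounded_linear_fst cscale_prod_def)

lemma bounded_clinear_snd: "bounded_clinear snd"
  by (simp add: bounded_clinear_def bounded_linear_snd cscale_prod_def)

lemma bounded_clinear_Pair_zero_right: "bounded_clinear (\<lambda>x. (x, 0::'b::complex_banach))"
  by (auto simp: bounded_clinear_def cscale_prod_def
      intro: bounded_linear_Pair bounded_linear_ident bounded_linear_zero)

lemma bounded_clinear_Pair_zero_left: "bounded_clinear (\<lambda>x. (0::'b::complex_banach, x))"
  by (auto simp: bounded_clinear_def cscale_prod_def
      intro: bounded_linear_Pair bounded_linear_ident bounded_linear_zero)

lemma bounded_linear_funpow:
  "bounded_linear (f::'a::real_normed_vector \<Rightarrow> 'a) \<Longrightarrow> bounded_linear (f ^^ n)"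
proof (induction n)
  case 0
  show ?case
    by (simp add: id_def bounded_linear_ident)
next
  case (Suc n)
  then show ?case using bounded_linear_compose[of f "f ^^ n"] by (simp add: o_def)
qed

lemma csubspace_add: "csubspace M \<Longrightarrow> x \<in> M \<Longrightarrow> y \<in> M \<Longrightarrow> x + y \<in> M"
  by (simp add: csubspace_def)

lemma csubspace_cscale: "csubspace M \<Longrightarrow> x \<in> M \<Longrightarrow> c *\<^sub>C x \<in> M"
  by (simp add: csubspace_def)

lemma csubspace_imp_subspace: "csubspace M \<Longrightarrow> subspace M"
  by (simp add: csubspace_def subspace_def flip: cscale_of_real)

lemma csubspace_UNIV: "csubspace UNIV"
  by (simp add: csubspace_def)

lemma csubspace_kernel: "bounded_clinear f \<Longrightarrow> csubspace {x. f x = 0}"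
  unfolding csubspace_def
  by (simp add: bounded_clinear_cscale linear_0 linear_add bounded_clinear_linear)

lemma csubspace_image: "bounded_clinear f \<Longrightarrow> csubspace M \<Longrightarrow> csubspace (f ` M)"
  unfolding csubspace_def
  by (auto simp: image_iff) (metis bounded_clinear_linear linear_0,
      metis bounded_clinear_linear linear_add, metis bounded_clinear_cscale)

lemma closed_kernel: "bounded_linear f \<Longrightarrow> closed {x. f x = 0}"
  by (intro closed_Collect_eq continuous_on_const) (simp add: linear_continuous_on)

section \<open>Sequentially compact operators\<close>

definition seq_compact_op :: "('a::real_normed_vector \<Rightarrow> 'b::real_normed_vector) \<Rightarrow> bool" where
  "seq_compact_op K \<longleftrightarrow>
     (\<forall>x::nat \<Rightarrow> 'a. bounded (range x) \<longrightarrow> (\<exists>r. strict_mono r \<and> convergent (\<lambda>n. K (x (r n)))))"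

lemma seq_compact_opD:
  "seq_compact_op K \<Longrightarrow> bounded (range (x::nat \<Rightarrow> _)) \<Longrightarrow>
    \<exists>r. strict_mono r \<and> convergent (\<lambda>n. K (x (r n)))"
  unfolding seq_compact_op_def by blast

lemma compact_op_imp_seq_compact_op:
  assumes "compact_op S"
  shows "seq_compact_op S"
  unfolding seq_compact_op_def
proof (intro allI impI)
  fix x :: "nat \<Rightarrow> 'a" assume "bounded (range x)"
  then obtain b where b: "0 < b" "\<And>n. norm (x n) \<le> b"
    by (meson bounded_pos rangeI)
  have S: "bounded_clinear S" and K: "compact (closure (S ` cball 0 1))"
    using assms by (auto simp: compact_op_def)
  have "S (x n /\<^sub>R b) \<in> closure (S ` cball 0 1)" for n
    using b by (intro subsetD[OF closure_subset] imageI) (simp add: field_simps)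
  then obtain l r where r: "strict_mono r" "((\<lambda>n. S (x n /\<^sub>R b)) \<circ> r) \<longlonglongrightarrow> l"
    using compact_imp_seq_compact[OF K] by (metis seq_compactE)
  have "S (x n) = b *\<^sub>R S (x n /\<^sub>R b)" for n
    using b(1) linear_scale[OF bounded_clinear_linear[OF S]] by simp
  then have "(\<lambda>n. S (x (r n))) \<longlonglongrightarrow> b *\<^sub>R l"
    using tendsto_scaleR[OF tendsto_const r(2), of b] by (simp add: o_def)
  then show "\<exists>r. strict_mono r \<and> convergent (\<lambda>n. S (x (r n)))"
    using r(1) convergent_def by blast
qed

lemma seq_compact_op_compose_left:
  assumes "seq_compact_op K" "bounded_linear L"
  shows "seq_compact_op (\<lambda>x. L (K x))"
  unfolding seq_compact_op_def
  using seq_compact_opD[OF assms(1)] bounded_linear.tendsto[OF assms(2)]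
  by (metis convergent_def)

lemma seq_compact_op_compose_right:
  assumes "seq_compact_op K" "bounded_linear B"
  shows "seq_compact_op (\<lambda>x. K (B x))"
  unfolding seq_compact_op_def
proof (intro allI impI)
  fix x :: "nat \<Rightarrow> 'c" assume "bounded (range x)"
  from bounded_linear_image[OF this assms(2)] have "bounded (range (\<lambda>n. B (x n)))"
    by (simp add: image_image)
  then show "\<exists>r. strict_mono r \<and> convergent (\<lambda>n. K (B (x (r n))))"
    by (rule seq_compact_opD[OF assms(1)])
qed

lemma seq_compact_op_add:
  assumes "seq_compact_op K1" "seq_compact_op K2"
  shows "seq_compact_op (\<lambda>x. K1 x + K2 x)"
  unfolding seq_compact_op_def
proof (intro allI impI)
  fix x :: "nat \<Rightarrow> 'a" assume x: "bounded (range x)"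
  obtain r1 where r1: "strict_mono r1" "convergent (\<lambda>n. K1 (x (r1 n)))"
    using seq_compact_opD[OF assms(1) x] by blast
  have "bounded (range (\<lambda>n. x (r1 n)))"
    by (rule bounded_subset[OF x]) auto
  then obtain r2 where r2: "strict_mono r2" "convergent (\<lambda>n. K2 (x (r1 (r2 n))))"
    using seq_compact_opD[OF assms(2)] by blast
  have "convergent (\<lambda>n. K1 (x (r1 (r2 n))))"
    using convergent_subseq_convergent[OF r1(2) r2(1)] by (simp add: o_def)
  then have "convergent (\<lambda>n. K1 (x (r1 (r2 n))) + K2 (x (r1 (r2 n))))"
    using r2(2) by (rule convergent_add)
  then show "\<exists>r. strict_mono r \<and> convergent (\<lambda>n. K1 (x (r n)) + K2 (x (r n)))"
    using strict_mono_o[OF r1(1) r2(1)] by (auto simp: o_def)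
qed

lemma seq_compact_op_funpow:
  fixes A :: "'a::real_normed_vector \<Rightarrow> 'a"
  assumes "bounded_linear A" "seq_compact_op (\<lambda>x. x - A x)"
  shows "seq_compact_op (\<lambda>x. x - (A ^^ n) x)"
proof (induction n)
  case 0
  show ?case
    by (simp add: seq_compact_op_def convergent_const) (metis strict_mono_id)
next
  case (Suc n)
  have "seq_compact_op (\<lambda>x. (x - (A ^^ n) x) + ((A ^^ n) x - A ((A ^^ n) x)))"
    by (intro seq_compact_op_add Suc seq_compact_op_compose_right[OF assms(2)]
        bounded_linear_funpow assms(1))
  then show ?case by simp
qed

lemma seq_compact_op_no_separated_sequence:
  fixes x :: "nat \<Rightarrow> 'a::real_normed_vector"
  assumes "seq_compact_op K" "bounded (range x)" "0 < e"
    and "\<And>m n. m < n \<Longrightarrow> e \<le> norm (K (x n) - K (x m))"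
  shows False
proof -
  obtain r where r: "strict_mono r" "convergent (\<lambda>n. K (x (r n)))"
    using seq_compact_opD[OF assms(1,2)] by blast
  then obtain N where "\<forall>m\<ge>N. \<forall>n\<ge>N. dist (K (x (r m))) (K (x (r n))) < e"
    using metric_CauchyD[OF convergent_Cauchy[OF r(2)] assms(3)] by blast
  then have "norm (K (x (r (Suc N))) - K (x (r N))) < e"
    by (auto simp: dist_norm)
  moreover have "r N < r (Suc N)"
    using r(1) by (simp add: strict_mono_def)
  ultimately show False
    using assms(4) by force
qed

section \<open>The Riesz lemma\<close>

lemma riesz_lemma:
  fixes M :: "'a::real_normed_vector set"
  assumes "closed M" "subspace M" "y \<notin> M"
  shows "\<exists>m\<in>M. 0 < norm (y - m) \<and> (\<forall>k\<in>M. 1/2 \<le> norm ((y - m) /\<^sub>R norm (y - m) - k))"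
proof -
  have ne: "M \<noteq> {}"
    using subspace_0[OF assms(2)] by auto
  have d: "0 < infdist y M"
    using infdist_pos_not_in_closed[OF assms(1) ne assms(3)] .
  then have "infdist y M < 2 * infdist y M"
    by simp
  then obtain m where m: "m \<in> M" "dist y m < 2 * infdist y M"
    unfolding infdist_notempty[OF ne]
    by (subst (asm) cINF_less_iff) (auto simp: ne intro: bdd_belowI[of _ 0])
  define t where "t = norm (y - m)"
  have t: "0 < t"
    using m(1) assms(3) by (auto simp: t_def)
  have "1/2 \<le> norm ((y - m) /\<^sub>R t - k)" if k: "k \<in> M" for k
  proof -
    have "m + t *\<^sub>R k \<in> M"
      using k m(1) assms(2) by (simp add: subspace_add subspace_scale)
    then have "infdist y M \<le> norm (y - (m + t *\<^sub>R k))"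
      using infdist_le by (metis dist_norm)
    moreover have "y - (m + t *\<^sub>R k) = t *\<^sub>R ((y - m) /\<^sub>R t - k)"
      using t by (simp add: algebra_simps)
    ultimately have "infdist y M \<le> t * norm ((y - m) /\<^sub>R t - k)"
      using t by simp
    then have "t * 1 < t * (2 * norm ((y - m) /\<^sub>R t - k))"
      using m(2) by (simp add: t_def dist_norm)
    then have "1 < 2 * norm ((y - m) /\<^sub>R t - k)"
      using t by (auto dest: mult_left_less_imp_less)
    then show ?thesis
      by simp
  qed
  then show ?thesis
    using m(1) t by (auto simp: t_def)
qed

corollary riesz_lemma_subspace:
  fixes M N :: "'a::real_normed_vector set"
  assumes "closed M" "subspace M" "subspace N" "M \<subseteq> N" "\<not> N \<subseteq> M"
  shows "\<exists>v\<in>N. norm v = 1 \<and> (\<forall>k\<in>M. 1/2 \<le> norm (v - k))"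
proof -
  obtain y where y: "y \<in> N" "y \<notin> M"
    using assms(5) by blast
  obtain m where m: "m \<in> M" "0 < norm (y - m)" "\<forall>k\<in>M. 1/2 \<le> norm ((y - m) /\<^sub>R norm (y - m) - k)"
    using riesz_lemma[OF assms(1,2) y(2)] by blast
  have "(y - m) /\<^sub>R norm (y - m) \<in> N"
    using y(1) m(1) assms(3,4) by (auto intro: subspace_scale subspace_diff)
  then show ?thesis
    using m(2,3) by (intro bexI[of _ "(y - m) /\<^sub>R norm (y - m)"]) auto
qed

section \<open>Operators that are left invertible modulo a compact operator\<close>

text \<open>Throughout, \<open>x = A (B x) + K x\<close> with \<open>K\<close> compact: \<open>B\<close> has the left inverse \<open>A\<close>
  modulo \<open>K\<close>. The basic example is \<open>B = I - K\<close>, \<open>A = I\<close>.\<close>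

lemma left_inverse_mod_compact_convergent_subseq:
  fixes B :: "'a::real_normed_vector \<Rightarrow> 'b::real_normed_vector"
  assumes K: "seq_compact_op K" and A: "bounded_linear A" and B: "bounded_linear B"
    and eq: "\<And>x. x = A (B x) + K x"
    and u: "bounded (range u)" "(\<lambda>n. B (u n)) \<longlonglongrightarrow> y"
  shows "\<exists>r w. strict_mono r \<and> (\<lambda>n. u (r n)) \<longlonglongrightarrow> w \<and> B w = y"
proof -
  obtain r k where r: "strict_mono r" "(\<lambda>n. K (u (r n))) \<longlonglongrightarrow> k"
    using seq_compact_opD[OF K u(1)] by (auto simp: convergent_def)
  have By: "(\<lambda>n. B (u (r n))) \<longlonglongrightarrow> y"
    using LIMSEQ_subseq_LIMSEQ[OF u(2) r(1)] by (simp add: o_def)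
  have "(\<lambda>n. A (B (u (r n))) + K (u (r n))) \<longlonglongrightarrow> A y + k"
    by (intro tendsto_add bounded_linear.tendsto[OF A] By r(2))
  then have w: "(\<lambda>n. u (r n)) \<longlonglongrightarrow> A y + k"
    by (simp flip: eq)
  have "B (A y + k) = y"
    by (rule LIMSEQ_unique[OF bounded_linear.tendsto[OF B w] By])
  then show ?thesis
    using r(1) w by blast
qed

lemma left_inverse_mod_compact_dist_kernel:
  fixes B :: "'a::real_normed_vector \<Rightarrow> 'b::real_normed_vector"
  assumes K: "seq_compact_op K" and A: "bounded_linear A" and B: "bounded_linear B"
    and eq: "\<And>x. x = A (B x) + K x"
  shows "\<exists>c. \<forall>x. \<exists>k. B k = 0 \<and> norm (x - k) \<le> c * norm (B x)"
proof (rule ccontr)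
  let ?N = "{x. B x = 0}"
  assume "\<not> ?thesis"
  then have "\<forall>n::nat. \<exists>x. \<forall>k. B k = 0 \<longrightarrow> real (Suc n) * norm (B x) < norm (x - k)"
    by (auto simp: not_le)
  then obtain x where x: "\<And>n k. B k = 0 \<Longrightarrow> real (Suc n) * norm (B (x n)) < norm (x n - k)"
    by metis
  have "x n \<notin> ?N" for n
    using x[of "x n" n] by auto
  then have "\<forall>n. \<exists>m\<in>?N. 0 < norm (x n - m)
      \<and> (\<forall>k\<in>?N. 1/2 \<le> norm ((x n - m) /\<^sub>R norm (x n - m) - k))"
    using riesz_lemma[OF closed_kernel[OF B] linear_subspace_kernel[OF bounded_linear.linear[OF B]]]
    by blast
  then obtain m where m: "\<And>n. B (m n) = 0" "\<And>n. 0 < norm (x n - m n)"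
    "\<And>n k. B k = 0 \<Longrightarrow> 1/2 \<le> norm ((x n - m n) /\<^sub>R norm (x n - m n) - k)"
    by (simp add: Ball_def) metis
  define v where "v n = (x n - m n) /\<^sub>R norm (x n - m n)" for n
  have "norm (B (v n)) = norm (B (x n)) / norm (x n - m n)" for n
    using m(1,2)[of n]
    by (simp add: v_def linear_scale linear_diff bounded_linear.linear[OF B] field_simps)
  then have "norm (B (v n)) < 1 / real (Suc n)" for n
    using x[OF m(1), of n] m(2)[of n] by (simp add: field_simps del: of_nat_Suc)
  then have "(\<lambda>n. B (v n)) \<longlonglongrightarrow> 0"
    by (intro LIMSEQ_norm_0) auto
  moreover have "bounded (range v)"
    using m(2) by (auto simp: bounded_iff v_def)
  ultimately obtain r w where rw: "(\<lambda>n. v (r n)) \<longlonglongrightarrow> w" "B w = 0"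
    using left_inverse_mod_compact_convergent_subseq[OF K A B eq] by blast
  then obtain n where "dist (v (r n)) w < 1/2"
    using lim_sequentially by (metis dual_order.refl half_gt_zero zero_less_one)
  then show False
    using m(3)[OF rw(2), of "r n"] by (simp add: v_def dist_norm)
qed

lemma left_inverse_mod_compact_closed_range:
  fixes B :: "'a::real_normed_vector \<Rightarrow> 'b::real_normed_vector"
  assumes K: "seq_compact_op K" and A: "bounded_linear A" and B: "bounded_linear B"
    and eq: "\<And>x. x = A (B x) + K x"
  shows "closed (range B)"
  unfolding closed_sequential_limits
proof (intro allI impI, elim conjE)
  fix z y assume "\<forall>n. z n \<in> range B" and zy: "z \<longlonglongrightarrow> y"
  then have "\<forall>n. \<exists>x. z n = B x"
    by blast
  then obtain x where x: "\<And>n. z n = B (x n)"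
    by metis
  obtain c where "\<forall>x. \<exists>k. B k = 0 \<and> norm (x - k) \<le> c * norm (B x)"
    using left_inverse_mod_compact_dist_kernel[OF K A B eq] by blast
  then have "\<forall>n. \<exists>k. B k = 0 \<and> norm (x n - k) \<le> c * norm (B (x n))"
    by blast
  then obtain k where k: "\<And>n. B (k n) = 0" "\<And>n. norm (x n - k n) \<le> c * norm (B (x n))"
    by metis
  obtain b where b: "\<And>n. norm (z n) \<le> b"
    using convergent_imp_Bseq[of z] zy by (auto simp: convergent_def Bseq_def)
  have "norm (x n - k n) \<le> \<bar>c\<bar> * b" for n
  proof -
    have "norm (x n - k n) \<le> \<bar>c\<bar> * norm (z n)"
      using k(2)[of n] x[of n] by (metis abs_ge_self mult_right_mono norm_ge_zero order_trans)
    also have "\<dots> \<le> \<bar>c\<bar> * b"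
      by (rule mult_left_mono[OF b abs_ge_zero])
    finally show ?thesis .
  qed
  then have "bounded (range (\<lambda>n. x n - k n))"
    by (auto simp: bounded_iff)
  moreover have "(\<lambda>n. B (x n - k n)) \<longlonglongrightarrow> y"
    using zy by (simp add: x[symmetric] k(1) linear_diff bounded_linear.linear[OF B])
  ultimately obtain w where "B w = y"
    using left_inverse_mod_compact_convergent_subseq[OF K A B eq] by blast
  then show "y \<in> range B" by blast
qed

lemma left_inverse_mod_compact_bounded_below:
  fixes B :: "'a::real_normed_vector \<Rightarrow> 'b::real_normed_vector"
  assumes K: "seq_compact_op K" and A: "bounded_linear A" and B: "bounded_linear B"
    and eq: "\<And>x. x = A (B x) + K x"
    and R: "subspace R" "closed R" and inj: "\<And>x. x \<in> R \<Longrightarrow> B x = 0 \<Longrightarrow> x = 0"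
  shows "\<exists>e>0. \<forall>x\<in>R. e * norm x \<le> norm (B x)"
proof (rule ccontr)
  assume "\<not> ?thesis"
  then have "\<forall>e>0. \<exists>x\<in>R. norm (B x) < e * norm x"
    by (auto simp: not_le)
  then have "\<exists>x\<in>R. norm (B x) < norm x / real (Suc n)" for n
    using spec[of _ "inverse (real (Suc n))"] by (simp add: divide_inverse_commute)
  then obtain x where x: "\<And>n. x n \<in> R" "\<And>n. norm (B (x n)) < norm (x n) / real (Suc n)"
    by metis
  have "0 < norm (x n) / real (Suc n)" for n
    by (rule le_less_trans[OF norm_ge_zero x(2)])
  then have nx: "0 < norm (x n)" for n
    by (simp add: zero_less_divide_iff)
  define u where "u n = x n /\<^sub>R norm (x n)" for n
  have uR: "u n \<in> R" and nu: "norm (u n) = 1" for n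
    using x(1) nx by (auto simp: u_def subspace_scale[OF R(1)])
  have "norm (B (u n)) < 1 / real (Suc n)" for n
    using x(2)[of n] nx[of n]
    by (simp add: u_def linear_scale bounded_linear.linear[OF B] field_simps del: of_nat_Suc)
  then have "(\<lambda>n. B (u n)) \<longlonglongrightarrow> 0"
    by (intro LIMSEQ_norm_0) auto
  moreover have "bounded (range u)"
    using nu by (auto simp: bounded_iff)
  ultimately obtain r w where rw: "(\<lambda>n. u (r n)) \<longlonglongrightarrow> w" "B w = 0"
    using left_inverse_mod_compact_convergent_subseq[OF K A B eq] by blast
  have "w \<in> R"
    using closed_sequentially[OF R(2) _ rw(1)] uR by blast
  moreover have "norm w = 1"
    using LIMSEQ_unique[OF tendsto_norm[OF rw(1)]] nu by simp
  ultimately show False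
    using inj rw(2) by force
qed

section \<open>Finite dimensional subspaces\<close>

lemma csubspace_cspan: "csubspace (cspan B)"
  unfolding cspan_def csubspace_def by auto

lemma cspan_superset: "B \<subseteq> cspan B"
  unfolding cspan_def by auto

lemma cspan_minimal: "csubspace M \<Longrightarrow> B \<subseteq> M \<Longrightarrow> cspan B \<subseteq> M"
  unfolding cspan_def by auto

lemma cspan_mono: "A \<subseteq> B \<Longrightarrow> cspan A \<subseteq> cspan B"
  unfolding cspan_def by auto

lemma cspan_empty: "cspan {} = {0::'a::complex_banach}"
proof -
  have "csubspace {0::'a}"
    by (simp add: csubspace_def)
  then show ?thesis
    using cspan_minimal[of "{0::'a}" "{}"] subspace_0[OF csubspace_imp_subspace[OF csubspace_cspan]]
    by blast
qed

lemma cspan_insert_mem: "v \<in> cspan B \<Longrightarrow> cspan (insert v B) = cspan B"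
  using cspan_minimal[OF csubspace_cspan, of "insert v B" B] cspan_superset[of B]
    cspan_mono[of B "insert v B"]
  by blast

lemma cspan_insert: "cspan (insert v B) = {b + c *\<^sub>C v | b c. b \<in> cspan B}"
  (is "_ = ?R")
proof
  have B0: "0 \<in> cspan B"
    by (rule subspace_0[OF csubspace_imp_subspace[OF csubspace_cspan]])
  have "csubspace ?R"
    unfolding csubspace_def
  proof (intro conjI ballI allI)
    show "0 \<in> ?R"
      using B0 by (auto intro!: exI[of _ 0] exI[of _ "0::complex"])
  next
    fix x y assume "x \<in> ?R" "y \<in> ?R"
    then obtain b1 c1 b2 c2
      where "x = b1 + c1 *\<^sub>C v" "b1 \<in> cspan B" "y = b2 + c2 *\<^sub>C v" "b2 \<in> cspan B"
      by blast
    then show "x + y \<in> ?R"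
      by (auto intro!: exI[of _ "b1 + b2"] exI[of _ "c1 + c2"] csubspace_add[OF csubspace_cspan]
          simp: cscale_add_left algebra_simps)
  next
    fix c x assume "x \<in> ?R"
    then obtain b1 c1 where "x = b1 + c1 *\<^sub>C v" "b1 \<in> cspan B"
      by blast
    then show "c *\<^sub>C x \<in> ?R"
      by (auto intro!: exI[of _ "c *\<^sub>C b1"] exI[of _ "c * c1"] csubspace_cscale[OF csubspace_cspan]
          simp: cscale_add_right cscale_cscale)
  qed
  moreover have "insert v B \<subseteq> ?R"
  proof
    fix x assume "x \<in> insert v B"
    then show "x \<in> ?R"
    proof
      assume "x = v"
      then show ?thesis
        using B0 by (auto intro!: exI[of _ 0] exI[of _ "1::complex"])
    next
      assume "x \<in> B"
      then show ?thesis
        using cspan_superset by (auto intro!: exI[of _ x] exI[of _ "0::complex"])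
    qed
  qed
  ultimately show "cspan (insert v B) \<subseteq> ?R"
    by (rule cspan_minimal)
next
  show "?R \<subseteq> cspan (insert v B)"
  proof
    fix x assume "x \<in> ?R"
    then obtain b c where x: "x = b + c *\<^sub>C v" "b \<in> cspan B"
      by blast
    have "b \<in> cspan (insert v B)"
      using x(2) cspan_mono[of B "insert v B"] by blast
    moreover have "c *\<^sub>C v \<in> cspan (insert v B)"
      using cspan_superset csubspace_cscale[OF csubspace_cspan] by blast
    ultimately show "x \<in> cspan (insert v B)"
      unfolding x(1) by (rule csubspace_add[OF csubspace_cspan])
  qed
qed

lemma cmod_mult_infdist_le:
  fixes M :: "'a::complex_banach set"
  assumes M: "csubspace M" and b: "b \<in> M"
  shows "cmod c * infdist v M \<le> norm (b + c *\<^sub>C v)"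
proof (cases "c = 0")
  case False
  have "- (inverse c *\<^sub>C b) \<in> M"
    using b by (simp add: subspace_neg[OF csubspace_imp_subspace[OF M]] csubspace_cscale[OF M])
  then have "infdist v M \<le> norm (v + inverse c *\<^sub>C b)"
    using infdist_le by (metis diff_minus_eq_add dist_norm)
  then have "cmod c * infdist v M \<le> norm (c *\<^sub>C (v + inverse c *\<^sub>C b))"
    by (simp add: norm_cscale mult_left_mono)
  also have "c *\<^sub>C (v + inverse c *\<^sub>C b) = b + c *\<^sub>C v"
    using False by (simp add: cscale_add_right cscale_cscale add.commute)
  finally show ?thesis .
qed simp

lemma Cauchy_coefficients_outside_subspace:
  fixes M :: "'a::complex_banach set"
  assumes M: "csubspace M" and d: "0 < infdist v M" and b: "\<And>n. b n \<in> M"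
    and Cauchy: "Cauchy (\<lambda>n. b n + c n *\<^sub>C v)"
  shows "Cauchy c"
proof (rule metric_CauchyI)
  fix e :: real assume e: "0 < e"
  obtain N where N: "\<And>m n. N \<le> m \<Longrightarrow> N \<le> n \<Longrightarrow>
      dist (b m + c m *\<^sub>C v) (b n + c n *\<^sub>C v) < e * infdist v M"
    using metric_CauchyD[OF Cauchy] e d by (meson mult_pos_pos)
  have "dist (c m) (c n) < e" if "N \<le> m" "N \<le> n" for m n
  proof -
    have "cmod (c m - c n) * infdist v M \<le> norm ((b m - b n) + (c m - c n) *\<^sub>C v)"
      by (rule cmod_mult_infdist_le[OF M subspace_diff[OF csubspace_imp_subspace[OF M] b b]])
    also have "(b m - b n) + (c m - c n) *\<^sub>C v = (b m + c m *\<^sub>C v) - (b n + c n *\<^sub>C v)"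
      using cscale_add_left[of "c m - c n" "c n" v] by (simp add: algebra_simps)
    also have "norm ((b m + c m *\<^sub>C v) - (b n + c n *\<^sub>C v)) < e * infdist v M"
      using N[OF that] by (simp add: dist_norm)
    finally show ?thesis
      using d by (simp add: dist_norm)
  qed
  then show "\<exists>N. \<forall>m\<ge>N. \<forall>n\<ge>N. dist (c m) (c n) < e"
    by blast
qed

lemma closed_cspan_insert:
  fixes B :: "'a::complex_banach set"
  assumes cl: "closed (cspan B)" and v: "v \<notin> cspan B"
  shows "closed (cspan (insert v B))"
  unfolding cspan_insert closed_sequential_limits
proof (intro allI impI, elim conjE)
  let ?M = "cspan B"
  have d: "0 < infdist v ?M"
    using infdist_pos_not_in_closed[OF cl _ v] csubspace_cspan[of B] by (auto simp: csubspace_def)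
  fix x l assume "\<forall>n. x n \<in> {b + c *\<^sub>C v |b c. b \<in> ?M}" and lim: "x \<longlonglongrightarrow> l"
  then have "\<forall>n. \<exists>b c. x n = b + c *\<^sub>C v \<and> b \<in> ?M"
    by blast
  then obtain b c where bc: "\<And>n. x n = b n + c n *\<^sub>C v" "\<And>n. b n \<in> ?M"
    by metis
  have x: "x = (\<lambda>n. b n + c n *\<^sub>C v)"
    by (simp add: fun_eq_iff bc(1))
  have "Cauchy c"
    using Cauchy_coefficients_outside_subspace[OF csubspace_cspan d bc(2)]
      LIMSEQ_imp_Cauchy[OF lim] x by simp
  then obtain c0 where c0: "c \<longlonglongrightarrow> c0"
    using Cauchy_convergent_iff convergent_def by blast
  have "(\<lambda>n. norm (c n *\<^sub>C v - c0 *\<^sub>C v)) \<longlonglongrightarrow> 0"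
  proof -
    have "c n *\<^sub>C v - c0 *\<^sub>C v = (c n - c0) *\<^sub>C v" for n
      using cscale_add_left[of "c n - c0" c0 v] by (simp add: algebra_simps)
    moreover have "(\<lambda>n. cmod (c n - c0) * norm v) \<longlonglongrightarrow> 0 * norm v"
      using c0 by (intro tendsto_intros) (simp add: LIM_zero_iff tendsto_norm_zero_iff)
    ultimately show ?thesis
      by (simp add: norm_cscale)
  qed
  then have "(\<lambda>n. x n - c n *\<^sub>C v) \<longlonglongrightarrow> l - c0 *\<^sub>C v"
    by (intro tendsto_diff lim) (simp add: LIM_zero_cancel tendsto_norm_zero_iff)
  then have "b \<longlonglongrightarrow> l - c0 *\<^sub>C v"
    by (simp add: bc(1))
  then have "l - c0 *\<^sub>C v \<in> ?M"
    using closed_sequentially[OF cl] bc(2) by blast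
  then show "l \<in> {b + c *\<^sub>C v |b c. b \<in> ?M}"
    by (auto intro!: exI[of _ "l - c0 *\<^sub>C v"] exI[of _ c0])
qed

lemma closed_cspan_finite: "finite B \<Longrightarrow> closed (cspan (B::'a::complex_banach set))"
proof (induction B rule: finite_induct)
  case empty
  then show ?case by (simp add: cspan_empty)
next
  case (insert v B)
  show ?case
  proof (cases "v \<in> cspan B")
    case True
    then show ?thesis
      using insert.IH by (simp add: cspan_insert_mem)
  next
    case False
    then show ?thesis
      by (rule closed_cspan_insert[OF insert.IH])
  qed
qed

text \<open>\<open>greedy_set p n = {z 0, \<dots>, z (n - 1)}\<close> for the sequence \<open>z n = p (greedy_set p n)\<close>,
  each term of which is chosen by \<open>p\<close> from the set of its predecessors.\<close>

primrec greedy_set :: "('a set \<Rightarrow> 'a) \<Rightarrow> nat \<Rightarrow> 'a set" where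
  "greedy_set p 0 = {}"
| "greedy_set p (Suc n) = insert (p (greedy_set p n)) (greedy_set p n)"

lemma finite_greedy_set: "finite (greedy_set p n)"
  by (induction n) auto

lemma greedy_set_mem: "m < n \<Longrightarrow> p (greedy_set p m) \<in> greedy_set p n"
  by (induction n) (auto simp: less_Suc_eq)

lemma fixed_space_of_compact_finite_dim:
  fixes N :: "'a::complex_banach set"
  assumes cl: "closed N" and su: "csubspace N" and K: "seq_compact_op K"
    and fixed: "\<And>x. x \<in> N \<Longrightarrow> K x = x"
  shows "\<not> infinite_dim N"
proof
  assume inf: "infinite_dim N"
  define P where "P F v \<longleftrightarrow> v \<in> N \<and> norm v = 1 \<and> (\<forall>k\<in>cspan F. 1/2 \<le> norm (v - k))" for F v
  have "\<exists>v. P F v" if F: "finite F" "F \<subseteq> N" for F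
  proof -
    have "\<not> N \<subseteq> cspan F"
      using inf F(1) by (auto simp: infinite_dim_def)
    moreover have "cspan F \<subseteq> N"
      by (rule cspan_minimal[OF su F(2)])
    ultimately show ?thesis
      unfolding P_def
      using riesz_lemma_subspace[OF closed_cspan_finite[OF F(1)]
          csubspace_imp_subspace[OF csubspace_cspan] csubspace_imp_subspace[OF su]]
      by blast
  qed
  then obtain p where p: "\<And>F. finite F \<Longrightarrow> F \<subseteq> N \<Longrightarrow> P F (p F)"
    by metis
  have W: "greedy_set p n \<subseteq> N \<and> P (greedy_set p n) (p (greedy_set p n))" for n
  proof (induction n)
    case (Suc n)
    then have "greedy_set p (Suc n) \<subseteq> N"
      by (simp add: P_def)
    then show ?case
      using p[OF finite_greedy_set] by blast
  qed (simp add: p)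
  define z where "z n = p (greedy_set p n)" for n
  have z: "P (greedy_set p n) (z n)" for n
    using W by (simp add: z_def)
  have bounded: "bounded (range z)"
    using z by (auto simp: bounded_iff P_def)
  have separated: "1/2 \<le> norm (K (z n) - K (z m))" if "m < n" for m n
  proof -
    have "z m \<in> cspan (greedy_set p n)"
      using cspan_superset greedy_set_mem[OF that] by (fastforce simp: z_def)
    then show ?thesis
      using z[of n] z[of m] fixed by (simp add: P_def)
  qed
  show False
    by (rule seq_compact_op_no_separated_sequence[OF K bounded _ separated]) simp
qed

section \<open>Riesz theory of compact perturbations of the identity\<close>

lemma compact_perturbation_ascending_chain:
  fixes A :: "'a::real_normed_vector \<Rightarrow> 'a"
  assumes C: "seq_compact_op (\<lambda>x. x - A x)"
    and M: "\<And>n. subspace (M n)" "\<And>n. closed (M n)"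
    and mono: "\<And>n. M n \<subseteq> M (Suc n)" and shift: "\<And>n. A ` M (Suc n) \<subseteq> M n"
  shows "\<exists>n. M (Suc n) \<subseteq> M n"
proof (rule ccontr)
  assume "\<nexists>n. M (Suc n) \<subseteq> M n"
  then have "\<forall>n. \<exists>v\<in>M (Suc n). norm v = 1 \<and> (\<forall>k\<in>M n. 1/2 \<le> norm (v - k))"
    using riesz_lemma_subspace[OF M(2) M(1) M(1) mono] by blast
  then obtain v where v: "\<And>n. v n \<in> M (Suc n)" "\<And>n. norm (v n) = 1"
    "\<And>n k. k \<in> M n \<Longrightarrow> 1/2 \<le> norm (v n - k)"
    by metis
  have separated: "1/2 \<le> norm ((v n - A (v n)) - (v q - A (v q)))" if "q < n" for q n
  proof -
    have "M q \<subseteq> M n" "M (Suc q) \<subseteq> M n"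
      using lift_Suc_mono_le[of M, OF mono] that by auto
    then have "A (v n) \<in> M n" "v q \<in> M n" "A (v q) \<in> M n"
      using v(1) shift by blast+
    then have "A (v n) + v q - A (v q) \<in> M n"
      by (intro subspace_diff[OF M(1)] subspace_add[OF M(1)])
    then have "1/2 \<le> norm (v n - (A (v n) + v q - A (v q)))"
      by (rule v(3))
    also have "v n - (A (v n) + v q - A (v q)) = (v n - A (v n)) - (v q - A (v q))"
      by (simp add: algebra_simps)
    finally show ?thesis .
  qed
  have bounded: "bounded (range v)"
    using v(2) by (auto simp: bounded_iff)
  show False
    by (rule seq_compact_op_no_separated_sequence[OF C bounded _ separated]) simp
qed

lemma compact_perturbation_descending_chain:
  fixes A :: "'a::real_normed_vector \<Rightarrow> 'a"
  assumes C: "seq_compact_op (\<lambda>x. x - A x)"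
    and M: "\<And>n. subspace (M n)" "\<And>n. closed (M n)"
    and antimono: "\<And>n. M (Suc n) \<subseteq> M n" and shift: "\<And>n. A ` M n \<subseteq> M (Suc n)"
  shows "\<exists>n. M n \<subseteq> M (Suc n)"
proof (rule ccontr)
  assume "\<nexists>n. M n \<subseteq> M (Suc n)"
  then have "\<forall>n. \<exists>v\<in>M n. norm v = 1 \<and> (\<forall>k\<in>M (Suc n). 1/2 \<le> norm (v - k))"
    using riesz_lemma_subspace[OF M(2) M(1) M(1) antimono] by blast
  then obtain v where v: "\<And>n. v n \<in> M n" "\<And>n. norm (v n) = 1"
    "\<And>n k. k \<in> M (Suc n) \<Longrightarrow> 1/2 \<le> norm (v n - k)"
    by metis
  have separated: "1/2 \<le> norm ((v n - A (v n)) - (v q - A (v q)))" if "q < n" for q n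
  proof -
    have "M n \<subseteq> M (Suc q)" "M (Suc n) \<subseteq> M (Suc q)"
      using lift_Suc_antimono_le[of M, OF antimono] that by auto
    then have "A (v q) \<in> M (Suc q)" "v n \<in> M (Suc q)" "A (v n) \<in> M (Suc q)"
      using v(1) shift by blast+
    then have "A (v q) + v n - A (v n) \<in> M (Suc q)"
      by (intro subspace_diff[OF M(1)] subspace_add[OF M(1)])
    then have "1/2 \<le> norm (v q - (A (v q) + v n - A (v n)))"
      by (rule v(3))
    also have "\<dots> = norm ((A (v q) + v n - A (v n)) - v q)"
      by (rule norm_minus_commute)
    also have "(A (v q) + v n - A (v n)) - v q = (v n - A (v n)) - (v q - A (v q))"
      by (simp add: algebra_simps)
    finally show ?thesis .
  qed
  have bounded: "bounded (range v)"
    using v(2) by (auto simp: bounded_iff)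
  show False
    by (rule seq_compact_op_no_separated_sequence[OF C bounded _ separated]) simp
qed

lemma funpow_kernel_mono:
  fixes A :: "'a::zero \<Rightarrow> 'a"
  assumes "A 0 = 0" "p \<le> m" "(A ^^ p) x = 0"
  shows "(A ^^ m) x = 0"
  using assms(2)
proof (induction m rule: dec_induct)
  case (step n)
  have "(A ^^ Suc n) x = A ((A ^^ n) x)"
    by simp
  then show ?case
    using step.IH assms(1) by simp
qed (rule assms(3))

lemma funpow_kernel_stable:
  fixes A :: "'a::zero \<Rightarrow> 'a"
  assumes stable: "\<And>x. (A ^^ Suc p) x = 0 \<Longrightarrow> (A ^^ p) x = 0" and "p \<le> m" "(A ^^ m) x = 0"
  shows "(A ^^ p) x = 0"
  using assms(2,3)
proof (induction m arbitrary: x rule: dec_induct)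
  case (step m)
  have "(A ^^ m) (A x) = 0"
    using step.prems by (simp only: funpow_Suc_right o_apply)
  then have "(A ^^ Suc p) x = 0"
    using step.IH by (simp only: funpow_Suc_right o_apply)
  then show ?case
    by (rule stable)
qed simp

lemma funpow_range_antimono:
  fixes A :: "'a \<Rightarrow> 'a"
  assumes "q \<le> m"
  shows "range (A ^^ m) \<subseteq> range (A ^^ q)"
proof -
  obtain d where "m = q + d"
    using assms le_iff_add by blast
  then have "(A ^^ m) z = (A ^^ q) ((A ^^ d) z)" for z
    by (simp add: funpow_add)
  then show ?thesis
    by (auto intro: rangeI)
qed

lemma funpow_range_stable:
  fixes A :: "'a \<Rightarrow> 'a"
  assumes stable: "range (A ^^ q) \<subseteq> range (A ^^ Suc q)" and "q \<le> m"
  shows "range (A ^^ q) \<subseteq> range (A ^^ m)"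
  using assms(2)
proof (induction m rule: dec_induct)
  case (step m)
  show ?case
  proof
    fix y assume "y \<in> range (A ^^ q)"
    then have "y \<in> range (A ^^ Suc q)"
      using stable by blast
    then obtain w where w: "y = A ((A ^^ q) w)"
      by auto
    obtain u where "(A ^^ q) w = (A ^^ m) u"
      using step.IH by blast
    then show "y \<in> range (A ^^ Suc m)"
      using w by (intro range_eqI[of _ _ u]) simp
  qed
qed simp

lemma compact_perturbation_finite_ascent:
  fixes A :: "'a::complex_banach \<Rightarrow> 'a"
  assumes A: "bounded_clinear A" and C: "seq_compact_op (\<lambda>x. x - A x)"
  shows "\<exists>p. {x. (A ^^ Suc p) x = 0} \<subseteq> {x. (A ^^ p) x = 0}"
proof (rule compact_perturbation_ascending_chain[OF C, of "\<lambda>n. {x. (A ^^ n) x = 0}"])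
  have bAn: "bounded_clinear (A ^^ n)" for n
    by (rule bounded_clinear_funpow[OF A])
  show "subspace {x. (A ^^ n) x = 0}" "closed {x. (A ^^ n) x = 0}" for n
    using bAn[of n] by (simp_all add: csubspace_imp_subspace csubspace_kernel closed_kernel
        bounded_clinear_imp_bounded_linear)
  show "{x. (A ^^ n) x = 0} \<subseteq> {x. (A ^^ Suc n) x = 0}" for n
    using funpow_kernel_mono[where A = A and p = n and m = "Suc n"]
      linear_0[OF bounded_clinear_linear[OF A]] by auto
  show "A ` {x. (A ^^ Suc n) x = 0} \<subseteq> {x. (A ^^ n) x = 0}" for n
    by (auto simp del: funpow.simps simp add: funpow_Suc_right)
qed

lemma compact_perturbation_finite_descent:
  fixes A :: "'a::complex_banach \<Rightarrow> 'a"
  assumes A: "bounded_clinear A" and C: "seq_compact_op (\<lambda>x. x - A x)"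
  shows "\<exists>q. range (A ^^ q) \<subseteq> range (A ^^ Suc q)"
proof (rule compact_perturbation_descending_chain[OF C, of "\<lambda>n. range (A ^^ n)"])
  have bAn: "bounded_clinear (A ^^ n)" for n
    by (rule bounded_clinear_funpow[OF A])
  show "subspace (range (A ^^ n))" for n
    by (intro csubspace_imp_subspace csubspace_image[OF bAn csubspace_UNIV])
  show "closed (range (A ^^ n))" for n
    using left_inverse_mod_compact_closed_range[OF
        seq_compact_op_funpow[OF bounded_clinear_imp_bounded_linear[OF A] C]
        bounded_linear_ident bounded_clinear_imp_bounded_linear[OF bAn]] by simp
  show "range (A ^^ Suc n) \<subseteq> range (A ^^ n)" for n
    by (rule funpow_range_antimono) simp
  show "A ` range (A ^^ n) \<subseteq> range (A ^^ Suc n)" for n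
  proof (rule image_subsetI)
    fix y assume "y \<in> range (A ^^ n)"
    then obtain z where "y = (A ^^ n) z"
      by blast
    then show "A y \<in> range (A ^^ Suc n)"
      by (intro range_eqI[of _ _ z]) simp
  qed
qed

text \<open>A common bound \<open>s\<close> for ascent and descent makes \<open>A\<^sup>s\<close> behave like a projection as far as
  kernel and range are concerned.\<close>

lemma compact_perturbation_stable_power:
  fixes A :: "'a::complex_banach \<Rightarrow> 'a"
  assumes A: "bounded_clinear A" and C: "seq_compact_op (\<lambda>x. x - A x)"
  shows "\<exists>s>0. (\<forall>z. (A ^^ s) ((A ^^ s) z) = 0 \<longrightarrow> (A ^^ s) z = 0)
    \<and> (\<forall>y. \<exists>z. (A ^^ s) y = (A ^^ s) ((A ^^ s) z))"
proof -
  have lA: "linear A"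
    using A by (rule bounded_clinear_linear)
  obtain p where p: "{x. (A ^^ Suc p) x = 0} \<subseteq> {x. (A ^^ p) x = 0}"
    using compact_perturbation_finite_ascent[OF A C] by blast
  obtain q where q: "range (A ^^ q) \<subseteq> range (A ^^ Suc q)"
    using compact_perturbation_finite_descent[OF A C] by blast
  define s where "s = Suc (p + q)"
  have "(A ^^ s) z = 0" if "(A ^^ s) ((A ^^ s) z) = 0" for z
  proof -
    have "(A ^^ (s + s)) z = 0"
      using that by (simp add: funpow_add)
    then have "(A ^^ p) z = 0"
      using funpow_kernel_stable[where A = A and p = p and m = "s + s"] p by (auto simp: s_def)
    then show ?thesis
      using funpow_kernel_mono[where A = A and p = p and m = s] linear_0[OF lA] by (simp add: s_def)
  qed
  moreover have "\<exists>z. (A ^^ s) y = (A ^^ s) ((A ^^ s) z)" for y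
  proof -
    have "(A ^^ s) y \<in> range (A ^^ q)"
      using funpow_range_antimono[where A = A and q = q and m = s] by (auto simp: s_def)
    then have "(A ^^ s) y \<in> range (A ^^ (s + s))"
      using funpow_range_stable[OF q, where m = "s + s"] by (auto simp: s_def)
    then show ?thesis
      by (auto simp: funpow_add)
  qed
  moreover have "0 < s"
    by (simp add: s_def)
  ultimately show ?thesis
    by blast
qed

lemma range_kernel_direct_sum:
  assumes P: "linear P"
    and ker: "\<And>z. P (P z) = 0 \<Longrightarrow> P z = 0" and ran: "\<And>y. \<exists>z. P y = P (P z)"
  shows "range P \<inter> {x. P x = 0} = {0}"
    and "{r + n |r n. r \<in> range P \<and> n \<in> {x. P x = 0}} = UNIV"
proof -
  have "0 \<in> range P"
    using linear_0[OF P] by (metis rangeI)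
  then show "range P \<inter> {x. P x = 0} = {0}"
    using ker linear_0[OF P] by auto
  have "\<exists>r n. y = r + n \<and> r \<in> range P \<and> P n = 0" for y
  proof -
    obtain z where "P y = P (P z)"
      using ran by blast
    then have "P (y - P z) = 0"
      by (simp add: linear_diff[OF P])
    then show ?thesis
      by (intro exI[of _ "P z"] exI[of _ "y - P z"]) auto
  qed
  then show "{r + n |r n. r \<in> range P \<and> n \<in> {x. P x = 0}} = UNIV"
    by blast
qed

lemma infinite_dim_summand:
  fixes M N :: "'a::complex_banach set"
  assumes inf: "infinite_dim (UNIV :: 'a set)"
    and sum: "{m + n |m n. m \<in> M \<and> n \<in> N} = UNIV" and fin: "\<not> infinite_dim N"
  shows "infinite_dim M"
  unfolding infinite_dim_def
proof
  assume "\<exists>B. finite B \<and> M \<subseteq> cspan B"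
  then obtain B1 where B1: "finite B1" "M \<subseteq> cspan B1"
    by blast
  obtain B2 where B2: "finite B2" "N \<subseteq> cspan B2"
    using fin by (auto simp: infinite_dim_def)
  have "y \<in> cspan (B1 \<union> B2)" for y :: 'a
  proof -
    obtain m n where "y = m + n" "m \<in> M" "n \<in> N"
      using sum by blast
    then show ?thesis
      using B1(2) B2(2) cspan_mono[of B1 "B1 \<union> B2"] cspan_mono[of B2 "B1 \<union> B2"]
        csubspace_add[OF csubspace_cspan] by blast
  qed
  then show False
    using inf B1(1) B2(1) by (auto simp: infinite_dim_def)
qed

text \<open>The range of \<open>(I - C)\<^sup>s\<close> is the complemented subspace: its complement, the kernel, is finite
  dimensional, and \<open>I - C\<close> is injective on it because its kernel lies in that of \<open>(I - C)\<^sup>s\<close>.\<close>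

lemma compact_perturbation_complemented_injective:
  fixes C :: "'a::complex_banach \<Rightarrow> 'a"
  assumes C: "seq_compact_op C" "bounded_clinear C" and inf: "infinite_dim (UNIV :: 'a set)"
  shows "\<exists>R. complemented R \<and> infinite_dim R \<and> (\<forall>y\<in>R. y - C y = 0 \<longrightarrow> y = 0)"
proof -
  define A where "A x = x - C x" for x
  have A: "bounded_clinear A"
    unfolding A_def[abs_def] by (rule bounded_clinear_diff[OF bounded_clinear_ident C(2)])
  have IA: "(\<lambda>x. x - A x) = C"
    by (simp add: A_def fun_eq_iff)
  obtain s where s: "0 < s" "\<And>z. (A ^^ s) ((A ^^ s) z) = 0 \<Longrightarrow> (A ^^ s) z = 0"
    "\<And>y. \<exists>z. (A ^^ s) y = (A ^^ s) ((A ^^ s) z)"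
    using compact_perturbation_stable_power[OF A] C(1) IA by auto
  define P where "P = A ^^ s"
  have P: "bounded_clinear P"
    unfolding P_def by (rule bounded_clinear_funpow[OF A])
  then have lP: "linear P" and bP: "bounded_linear P"
    by (simp_all add: bounded_clinear_linear bounded_clinear_imp_bounded_linear)
  have IP: "seq_compact_op (\<lambda>x. x - P x)"
    unfolding P_def using seq_compact_op_funpow[OF bounded_clinear_imp_bounded_linear[OF A]] C(1) IA
    by simp
  note sum = range_kernel_direct_sum[OF lP s(2,3)[folded P_def]]
  have "complemented (range P)"
    unfolding complemented_def
    using csubspace_image[OF P csubspace_UNIV] csubspace_kernel[OF P] closed_kernel[OF bP] sum
      left_inverse_mod_compact_closed_range[OF IP bounded_linear_ident bP]
    by (intro conjI exI[of _ "{x. P x = 0}"]) simp_all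
  moreover have "infinite_dim (range P)"
    using fixed_space_of_compact_finite_dim[OF closed_kernel[OF bP] csubspace_kernel[OF P] IP]
    by (intro infinite_dim_summand[OF inf sum(2)]) auto
  moreover have "y = 0" if "y \<in> range P" "y - C y = 0" for y
  proof -
    have "P y = 0"
      using that(2) s(1) linear_0[OF bounded_clinear_linear[OF bounded_clinear_funpow[OF A]]]
      by (cases s) (simp_all add: P_def A_def funpow_Suc_right del: funpow.simps)
    then show ?thesis
      using that(1) sum(1) by blast
  qed
  ultimately show ?thesis
    by blast
qed

section \<open>Embedding the prime space\<close>

lemma bounded_below_dist_le:
  assumes J: "linear J" and R: "subspace R" and e: "\<forall>x\<in>R. e * norm x \<le> norm (J x)"
    and ab: "a \<in> R" "b \<in> R"
  shows "e * dist a b \<le> dist (J a) (J b)"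
  using e[rule_format, OF subspace_diff[OF R ab]] by (simp add: dist_norm linear_diff[OF J])

lemma bounded_below_inj_on:
  assumes J: "linear J" and R: "subspace R" and e: "0 < e" "\<forall>x\<in>R. e * norm x \<le> norm (J x)"
  shows "inj_on J R"
proof (rule inj_onI)
  fix a b assume ab: "a \<in> R" "b \<in> R" and "J a = J b"
  then have "e * dist a b \<le> 0"
    using bounded_below_dist_le[OF J R e(2) ab] by simp
  then show "a = b"
    using e(1) by (simp add: mult_le_0_iff)
qed

lemma bounded_below_continuous_on_inv_into:
  assumes J: "linear J" and R: "subspace R" and e: "0 < e" "\<forall>x\<in>R. e * norm x \<le> norm (J x)"
  shows "continuous_on (J ` R) (inv_into R J)"
proof -
  have "dist (inv_into R J a) (inv_into R J b) \<le> 1 / e * dist a b"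
    if ab: "a \<in> J ` R" "b \<in> J ` R" for a b
  proof -
    obtain a' b' where "a' \<in> R" "b' \<in> R" "a = J a'" "b = J b'"
      using ab by blast
    then show ?thesis
      using bounded_below_dist_le[OF J R e(2), of a' b'] e(1) bounded_below_inj_on[OF J R e]
      by (simp add: field_simps)
  qed
  then have "(1 / e)-lipschitz_on (J ` R) (inv_into R J)"
    using e(1) by (intro lipschitz_onI) auto
  then show ?thesis
    by (rule lipschitz_on_continuous_on)
qed

lemma top_iso_onto_image_bounded_below:
  assumes phi: "top_iso_onto \<phi> R" and R: "csubspace R" "closed R" and J: "bounded_clinear J"
    and e: "0 < e" "\<forall>x\<in>R. e * norm x \<le> norm (J x)"
  shows "csubspace (J ` R) \<and> closed (J ` R) \<and> top_iso_onto (\<lambda>y. J (\<phi> y)) (J ` R)"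
proof -
  have sR: "subspace R"
    by (rule csubspace_imp_subspace[OF R(1)])
  have lJ: "linear J" and bJ: "bounded_linear J"
    using J by (simp_all add: bounded_clinear_linear bounded_clinear_imp_bounded_linear)
  have inj: "inj_on J R"
    by (rule bounded_below_inj_on[OF lJ sR e])
  have "complete (J ` R)"
    using complete_isometric_image[OF e(1) sR bJ e(2)] R(2) by (simp add: complete_eq_closed)
  then have closed: "closed (J ` R)"
    by (simp add: complete_eq_closed)
  have bij: "bij_betw \<phi> UNIV R" and cphi: "continuous_on R (inv_into UNIV \<phi>)"
    using phi by (auto simp: top_iso_onto_def)
  have inv_eq: "inv_into UNIV (\<lambda>y. J (\<phi> y)) x = inv_into UNIV \<phi> (inv_into R J x)"
    if "x \<in> J ` R" for x
    using inv_into_comp[of J \<phi> UNIV x] bij inj that by (simp add: bij_betw_def o_def)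
  have "continuous_on (J ` R) (\<lambda>x. inv_into UNIV \<phi> (inv_into R J x))"
    by (rule continuous_on_compose2[OF cphi bounded_below_continuous_on_inv_into[OF lJ sR e]])
      (use inj in simp)
  then have "continuous_on (J ` R) (inv_into UNIV (\<lambda>y. J (\<phi> y)))"
    by (rule continuous_on_eq) (simp add: inv_eq)
  moreover have "bij_betw (\<lambda>y. J (\<phi> y)) UNIV (J ` R)"
    using bij_betw_trans[OF bij inj_on_imp_bij_betw[OF inj]] by (simp add: o_def)
  moreover have "bounded_clinear (\<lambda>y. J (\<phi> y))"
    using phi by (auto simp: top_iso_onto_def intro: bounded_clinear_compose[OF J])
  ultimately show ?thesis
    using csubspace_image[OF J R(1)] closed by (simp add: top_iso_onto_def o_def)
qed

lemma equiv_after_ext_inverse: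
  fixes T :: "'x::complex_banach \<Rightarrow> 'x"
    and S :: "'y::complex_banach \<Rightarrow> 'y"
    and E :: "'y \<times> 'y2::complex_banach \<Rightarrow> 'x \<times> 'x2::complex_banach"
    and F :: "'x \<times> 'x2 \<Rightarrow> 'y \<times> 'y2"
  assumes equiv: "equiv_after_ext_via T S E F"
  obtains G where "bounded_clinear G" "\<And>w. F (G w) = w" "\<And>y. snd (G (y, 0)) = snd (E (S y, 0))"
proof -
  have eqn: "(\<lambda>(x, x'). (T x, x')) = E \<circ> (\<lambda>(y, y'). (S y, y')) \<circ> F"
    using equiv by (simp add: equiv_after_ext_via_def)
  obtain G where G: "bounded_clinear G" and FG: "\<And>w. F (G w) = w"
    using equiv by (auto simp: equiv_after_ext_via_def invertible_op_def fun_eq_iff)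
  have "snd (G (y, 0)) = snd (E (S y, 0))" for y
  proof -
    have "(\<lambda>(x, x'). (T x, x')) (G (y, 0)) = E (S y, 0)"
      using fun_cong[OF eqn, of "G (y, 0)"] by (simp add: FG)
    then show ?thesis
      by (simp add: case_prod_beta) (metis snd_conv)
  qed
  then show ?thesis
    using that G FG by blast
qed

lemma equiv_after_ext_left_inverse_mod_compact:
  fixes T :: "'x::complex_banach \<Rightarrow> 'x"
    and S :: "'y::complex_banach \<Rightarrow> 'y"
    and E :: "'y \<times> 'y2::complex_banach \<Rightarrow> 'x \<times> 'x2::complex_banach"
    and F :: "'x \<times> 'x2 \<Rightarrow> 'y \<times> 'y2"
  assumes equiv: "equiv_after_ext_via T S E F" and S: "compact_op S"
  shows "\<exists>(J :: 'y \<Rightarrow> 'x) (A :: 'x \<Rightarrow> 'y) (C :: 'y \<Rightarrow> 'y).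
    bounded_clinear J \<and> bounded_linear A \<and> bounded_clinear C \<and> seq_compact_op C
    \<and> (\<forall>y. y = A (J y) + C y)"
proof -
  have E: "bounded_clinear E" and F: "bounded_clinear F"
    using equiv by (auto simp: equiv_after_ext_via_def invertible_op_def)
  obtain G where G: "bounded_clinear G" and FG: "\<And>w. F (G w) = w"
    and snd_G: "\<And>y. snd (G (y, 0)) = snd (E (S y, 0))"
    by (rule equiv_after_ext_inverse[OF equiv]) blast
  define J where "J y = fst (G (y, 0::'y2))" for y
  define A where "A x = fst (F (x, 0::'x2))" for x
  define P where "P z = fst (F (0::'x, snd (E (z, 0::'y2))))" for z
  have "y = A (J y) + P (S y)" for y
  proof -
    have "(y, 0) = F ((J y, 0) + (0, snd (G (y, 0))))"
      by (simp add: J_def FG)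
    also have "\<dots> = F (J y, 0) + F (0, snd (E (S y, 0)))"
      by (simp only: snd_G linear_add[OF bounded_clinear_linear[OF F]])
    finally have "fst (y, 0::'y2) = fst (F (J y, 0) + F (0, snd (E (S y, 0))))"
      by (rule arg_cong)
    then show ?thesis
      by (simp add: A_def P_def)
  qed
  moreover have "bounded_clinear J"
    unfolding J_def[abs_def]
    by (rule bounded_clinear_compose[OF bounded_clinear_fst
          bounded_clinear_compose[OF G bounded_clinear_Pair_zero_right]])
  moreover have "bounded_clinear A"
    unfolding A_def[abs_def]
    by (rule bounded_clinear_compose[OF bounded_clinear_fst
          bounded_clinear_compose[OF F bounded_clinear_Pair_zero_right]])
  moreover have "bounded_clinear P"
    unfolding P_def[abs_def]
    by (rule bounded_clinear_compose[OF bounded_clinear_fst bounded_clinear_compose[OF F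
          bounded_clinear_compose[OF bounded_clinear_Pair_zero_left bounded_clinear_compose[OF
          bounded_clinear_snd bounded_clinear_compose[OF E bounded_clinear_Pair_zero_right]]]]])
  moreover have "seq_compact_op (\<lambda>y. P (S y))"
    using seq_compact_op_compose_left[OF compact_op_imp_seq_compact_op[OF S]]
      bounded_clinear_imp_bounded_linear[OF \<open>bounded_clinear P\<close>] .
  moreover have "bounded_clinear (\<lambda>y. P (S y))"
    using bounded_clinear_compose[OF \<open>bounded_clinear P\<close>] S by (auto simp: compact_op_def)
  ultimately show ?thesis
    using bounded_clinear_imp_bounded_linear
    by (intro exI[of _ J] exI[of _ A] exI[of _ "\<lambda>y. P (S y)"]) simp
qed

theorem corollary5p4:
  fixes T :: "'x::complex_banach \<Rightarrow> 'x"
    and S :: "'y::complex_banach \<Rightarrow> 'y"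
    and E :: "'y \<times> 'y2::complex_banach \<Rightarrow> 'x \<times> 'x2::complex_banach"
    and F :: "'x \<times> 'x2 \<Rightarrow> 'y \<times> 'y2"
  assumes "prime_space TYPE('y)"
    and "bounded_clinear T"
    and "compact_op S"
    and "equiv_after_ext_via T S E F"
  shows "\<exists>M :: 'x set. csubspace M \<and> closed M \<and> (\<exists>f :: 'y \<Rightarrow> 'x. top_iso_onto f M)"
proof -
  obtain J :: "'y \<Rightarrow> 'x" and A C where J: "bounded_clinear J" and A: "bounded_linear A"
    and C: "bounded_clinear C" "seq_compact_op C" and eq: "\<And>y. y = A (J y) + C y"
    using equiv_after_ext_left_inverse_mod_compact[OF assms(4,3)] by blast
  obtain R where R: "complemented R" "infinite_dim R" and inj: "\<forall>y\<in>R. y - C y = 0 \<longrightarrow> y = 0"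
    using compact_perturbation_complemented_injective[OF C(2,1)] assms(1)
    by (auto simp: prime_space_def)
  obtain \<phi> :: "'y \<Rightarrow> 'y" where \<phi>: "top_iso_onto \<phi> R"
    using assms(1) R by (auto simp: prime_space_def)
  have R': "csubspace R" "closed R"
    using R(1) by (auto simp: complemented_def)
  have "y = 0" if "y \<in> R" "J y = 0" for y
    using inj that eq[of y] linear_0[OF bounded_linear.linear[OF A]] by auto
  then obtain e where "0 < e" "\<forall>y\<in>R. e * norm y \<le> norm (J y)"
    using left_inverse_mod_compact_bounded_below[OF C(2) A bounded_clinear_imp_bounded_linear[OF J]
        eq csubspace_imp_subspace[OF R'(1)] R'(2)] by blast
  then show ?thesis
    using top_iso_onto_image_bounded_below[OF \<phi> R' J] by blast
qed

end
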